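(* Let $A\in\mathbb R^{(m-1)\times n}$, $b\in\mathbb R^{m-1}$, $c\in\mathbb R^n$, $d\in\mathbb R$, and let $\mathcal S=\{x\in\mathbb R^n:\|Ax-b\|_2\le c^Tx-d\}$. Assume $\mathcal S\neq\emptyset$, $A^TA-cc^T$ is positive semidefinite, and $\begin{bmatrix}b\\ d\end{bmatrix}$ is not in the image (column space) of $\begin{bmatrix}A\\ c^T\end{bmatrix}$. Then $$\mathcal S=\{x\in\mathbb R^n: x^T(A^TA-cc^T)x-2(A^Tb-cd)^Tx+b^Tb-d^2\le0\}.$$ *)

theory Defs
  imports "HOL-Analysis.Analysis"
begin

definition outer :: "real ^ 'n \<Rightarrow> real ^ 'n \<Rightarrow> real ^ 'n ^ 'n" where
  "outer u v = (\<chi> i j. u $ i * v $ j)"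

definition psd :: "real ^ 'n ^ 'n \<Rightarrow> bool" where
  "psd M \<longleftrightarrow> transpose M = M \<and> (\<forall>x. 0 \<le> x \<bullet> (M *v x))"

end

theory Submission
  imports Defs
begin

text \<open>Write \<open>f x = \<parallel>A x - b\<parallel>\<^sup>2 - (c\<^sup>T x - d)\<^sup>2\<close>; the quadratic inequality on the right is
  \<open>f x \<le> 0\<close>, and \<open>S \<subseteq> {f \<le> 0}\<close> is immediate. Positive semidefiniteness of \<open>A\<^sup>TA - cc\<^sup>T\<close>
  makes \<open>f\<close> convex. If \<open>f x \<le> 0\<close> but \<open>c\<^sup>T x < d\<close>, join \<open>x\<close> to a point \<open>y \<in> S\<close>, where
  \<open>c\<^sup>T y \<ge> d\<close>; on the segment there is a \<open>z\<close> with \<open>c\<^sup>T z = d\<close>, and convexity gives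
  \<open>\<parallel>A z - b\<parallel>\<^sup>2 = f z \<le> 0\<close>, so \<open>(b, d)\<close> lies in the image of \<open>(A, c\<^sup>T)\<close>.\<close>

lemma norm_convex_combination_power2:
  fixes p q :: "'a::real_inner"
  shows "(norm ((1 - t) *\<^sub>R p + t *\<^sub>R q))\<^sup>2
           = (1 - t) * (norm p)\<^sup>2 + t * (norm q)\<^sup>2 - t * (1 - t) * (norm (p - q))\<^sup>2"
  by (simp add: power2_norm_eq_inner inner_add_left inner_add_right inner_diff_left
      inner_diff_right inner_commute algebra_simps)

lemma convex_on_norm_power2_diff_power2:
  fixes L :: "'a::real_vector \<Rightarrow> 'b::real_inner" and l :: "'a \<Rightarrow> real"
  assumes "linear L" "linear l"
    and dominated: "\<And>h. (l h)\<^sup>2 \<le> (norm (L h))\<^sup>2"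
  shows "convex_on UNIV (\<lambda>x. (norm (L x - b))\<^sup>2 - (l x - d)\<^sup>2)"
proof (rule convex_onI)
  fix t :: real and x y :: 'a
  assume t: "0 < t" "t < 1"
  define z where "z = (1 - t) *\<^sub>R x + t *\<^sub>R y"
  have Lz: "L z - b = (1 - t) *\<^sub>R (L x - b) + t *\<^sub>R (L y - b)"
    and lz: "l z - d = (1 - t) *\<^sub>R (l x - d) + t *\<^sub>R (l y - d)"
    using assms(1,2) unfolding z_def
    by (simp_all add: linear_add linear_scale) (simp_all add: algebra_simps)
  have "(L x - b) - (L y - b) = L (x - y)" and "(l x - d) - (l y - d) = l (x - y)"
    using assms(1,2) by (simp_all add: linear_diff)
  then have "(norm (L z - b))\<^sup>2
      = (1 - t) * (norm (L x - b))\<^sup>2 + t * (norm (L y - b))\<^sup>2 - t * (1 - t) * (norm (L (x - y)))\<^sup>2"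
    and "(l z - d)\<^sup>2 = (1 - t) * (l x - d)\<^sup>2 + t * (l y - d)\<^sup>2 - t * (1 - t) * (l (x - y))\<^sup>2"
    using norm_convex_combination_power2[of t "L x - b" "L y - b"]
      norm_convex_combination_power2[of t "l x - d" "l y - d"]
    unfolding Lz lz by simp_all
  then have "(norm (L z - b))\<^sup>2 - (l z - d)\<^sup>2
      = (1 - t) * ((norm (L x - b))\<^sup>2 - (l x - d)\<^sup>2) + t * ((norm (L y - b))\<^sup>2 - (l y - d)\<^sup>2)
        - t * (1 - t) * ((norm (L (x - y)))\<^sup>2 - (l (x - y))\<^sup>2)"
    by (simp add: algebra_simps)
  moreover have "0 \<le> t * (1 - t) * ((norm (L (x - y)))\<^sup>2 - (l (x - y))\<^sup>2)"
    using t dominated[of "x - y"] by simp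
  ultimately show "(norm (L z - b))\<^sup>2 - (l z - d)\<^sup>2
      \<le> (1 - t) * ((norm (L x - b))\<^sup>2 - (l x - d)\<^sup>2) + t * ((norm (L y - b))\<^sup>2 - (l y - d)\<^sup>2)"
    by linarith
qed simp

lemma linear_crosses_level_on_segment:
  fixes l :: "'a::real_vector \<Rightarrow> real"
  assumes "linear l" "l x < d" "d \<le> l y"
  obtains t where "0 \<le> t" "t \<le> 1" "l ((1 - t) *\<^sub>R x + t *\<^sub>R y) = d"
proof
  define t where "t = (d - l x) / (l y - l x)"
  show "0 \<le> t" "t \<le> 1"
    using assms(2,3) by (simp_all add: t_def field_simps)
  have "l ((1 - t) *\<^sub>R x + t *\<^sub>R y) = l x + t * (l y - l x)"
    using assms(1) by (simp add: linear_add linear_scale) (simp add: algebra_simps)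
  then show "l ((1 - t) *\<^sub>R x + t *\<^sub>R y) = d"
    using assms(2,3) by (simp add: t_def)
qed

lemma second_order_cone_eq_power2_sublevel:
  fixes L :: "'a::real_vector \<Rightarrow> 'b::real_inner" and l :: "'a \<Rightarrow> real"
  assumes "linear L" "linear l"
    and dominated: "\<And>h. (l h)\<^sup>2 \<le> (norm (L h))\<^sup>2"
    and nonempty: "\<exists>y. norm (L y - b) \<le> l y - d"
    and not_in_image: "\<not> (\<exists>z. L z = b \<and> l z = d)"
  shows "{x. norm (L x - b) \<le> l x - d} = {x. (norm (L x - b))\<^sup>2 - (l x - d)\<^sup>2 \<le> 0}"
proof (intro set_eqI iffI; simp)
  define f where "f x = (norm (L x - b))\<^sup>2 - (l x - d)\<^sup>2" for x
  fix x
  show "norm (L x - b) \<le> l x - d \<Longrightarrow> (norm (L x - b))\<^sup>2 \<le> (l x - d)\<^sup>2"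
    by (simp add: power_mono)
  assume fx: "(norm (L x - b))\<^sup>2 \<le> (l x - d)\<^sup>2"
  show "norm (L x - b) \<le> l x - d"
  proof (rule ccontr)
    assume "\<not> norm (L x - b) \<le> l x - d"
    with fx have "l x < d"
      by (smt (verit) norm_ge_zero power2_le_imp_le)
    obtain y where y: "norm (L y - b) \<le> l y - d"
      using nonempty by blast
    then have fy: "f y \<le> 0"
      unfolding f_def by (auto intro: power_mono)
    have "d \<le> l y"
      using y norm_ge_zero[of "L y - b"] by linarith
    then obtain t where t: "0 \<le> t" "t \<le> 1" and lz: "l ((1 - t) *\<^sub>R x + t *\<^sub>R y) = d"
      using linear_crosses_level_on_segment[OF \<open>linear l\<close> \<open>l x < d\<close>] by blast
    define z where "z = (1 - t) *\<^sub>R x + t *\<^sub>R y"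
    have "f z \<le> (1 - t) * f x + t * f y"
      using convex_onD[OF convex_on_norm_power2_diff_power2[OF assms(1-3)]] t
      unfolding f_def z_def by blast
    also have "\<dots> \<le> 0"
      using t fx fy unfolding f_def by (simp add: mult_nonneg_nonpos add_nonpos_nonpos)
    finally have "(norm (L z - b))\<^sup>2 \<le> 0"
      using lz unfolding f_def z_def by simp
    then have "L z = b" by simp
    with lz not_in_image show False
      unfolding z_def by blast
  qed
qed

lemma quadratic_form_AtA_minus_outer:
  fixes A :: "real ^ 'n ^ 'm" and c x :: "real ^ 'n"
  shows "x \<bullet> ((transpose A ** A - outer c c) *v x) = (norm (A *v x))\<^sup>2 - (c \<bullet> x)\<^sup>2"
proof -
  have "outer c c *v x = (c \<bullet> x) *\<^sub>R c"
    by (simp add: vec_eq_iff outer_def matrix_vector_mult_def inner_vec_def sum_distrib_left mult_ac)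
  moreover have "x \<bullet> (transpose A *v (A *v x)) = (A *v x) \<bullet> (A *v x)"
    by (metis dot_lmul_matrix vector_transpose_matrix inner_commute)
  ultimately show ?thesis
    by (simp add: matrix_vector_mult_diff_rdistrib flip: matrix_vector_mul_assoc)
      (simp add: inner_diff_right dot_square_norm power2_eq_square inner_commute)
qed

lemma quadratic_inequality_eq_norm_power2_diff_power2:
  fixes A :: "real ^ 'n ^ 'm" and b :: "real ^ 'm" and c x :: "real ^ 'n"
  shows "x \<bullet> ((transpose A ** A - outer c c) *v x)
                 - 2 * ((transpose A *v b - d *\<^sub>R c) \<bullet> x) + b \<bullet> b - d\<^sup>2
     = (norm (A *v x - b))\<^sup>2 - (c \<bullet> x - d)\<^sup>2"
proof -
  have "(transpose A *v b) \<bullet> x = b \<bullet> (A *v x)"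
    by (metis dot_lmul_matrix vector_transpose_matrix inner_commute)
  then show ?thesis
    unfolding quadratic_form_AtA_minus_outer power2_norm_eq_inner
    by (simp add: inner_diff_left inner_diff_right power2_eq_square inner_commute algebra_simps)
qed

theorem lemma5p2:
  fixes A :: "real ^ 'n ^ 'm" and b :: "real ^ 'm" and c :: "real ^ 'n" and d :: real
  defines "S \<equiv> {x :: real ^ 'n. norm (A *v x - b) \<le> c \<bullet> x - d}"
  assumes "S \<noteq> {}"
    and "psd (transpose A ** A - outer c c)"
    and "\<not> (\<exists>x. A *v x = b \<and> c \<bullet> x = d)"
  shows "S = {x. x \<bullet> ((transpose A ** A - outer c c) *v x)
                 - 2 * ((transpose A *v b - d *\<^sub>R c) \<bullet> x) + b \<bullet> b - d\<^sup>2 \<le> 0}"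
proof -
  have "(c \<bullet> h)\<^sup>2 \<le> (norm (A *v h))\<^sup>2" for h
  proof -
    have "0 \<le> h \<bullet> ((transpose A ** A - outer c c) *v h)"
      using assms(3) unfolding psd_def by blast
    then show ?thesis
      unfolding quadratic_form_AtA_minus_outer by simp
  qed
  moreover have "linear ((*v) A)" "linear ((\<bullet>) c)"
    by (simp_all add: matrix_vector_mul_linear bounded_linear.linear bounded_linear_inner_right)
  ultimately show ?thesis
    using second_order_cone_eq_power2_sublevel[of "(*v) A" "(\<bullet>) c" b d] assms(2,4)
    unfolding S_def quadratic_inequality_eq_norm_power2_diff_power2 by auto
qed

end
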